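(* Let $S\subseteq\mathbb{N}^d$ be a GNS. Then $\tau(S)\le t(S)$, and $\tau(S)=t(S)$ holds if and only if for every $x\in\mathcal{H}(S)$ there exists a Frobenius allowable gap $F$ of $S$ with $F-x\in S$.
   Context: $\mathbb{N}=\{0,1,2,\dots\}$. A GNS is a submonoid $S\subseteq\mathbb{N}^d$ with finite complement $\mathcal{H}(S)=\mathbb{N}^d\setminus S$ (gaps). A relaxed monomial order is a total order $\prec$ on $\mathbb{N}^d$ with (i) $v\prec w\Rightarrow v\prec w+u$ for all $u\in\mathbb{N}^d$, (ii) $0\prec v$ for all $v\neq 0$. A gap is Frobenius allowable if it equals $\max_\prec\mathcal{H}(S)$ for some relaxed monomial order $\prec$; $FA(S)$ denotes the set of Frobenius allowable gaps and $\tau(S)=|FA(S)|$. A gap $P$ is pseudo-Frobenius if $P+s\in S$ for all nonzero $s\in S$; $PF(S)$ is the set of these and $t(S)=|PF(S)|$ is the type. The condition $F-x\in S$ means $F-x\in\mathbb{N}^d$ and lies in $S$. *)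

theory Defs
  imports Main
begin

text \<open>Elements of N^d are modelled as functions 'd => nat, where the dimension d is
  the cardinality of a finite index type 'd. Addition is componentwise.\<close>

definition vadd :: "('d \<Rightarrow> nat) \<Rightarrow> ('d \<Rightarrow> nat) \<Rightarrow> ('d \<Rightarrow> nat)" where
  "vadd v w = (\<lambda>i. v i + w i)"

definition vzero :: "'d \<Rightarrow> nat" where
  "vzero = (\<lambda>i. 0)"

definition GNS :: "('d::finite \<Rightarrow> nat) set \<Rightarrow> bool" where
  "GNS S \<longleftrightarrow> vzero \<in> S \<and> (\<forall>v\<in>S. \<forall>w\<in>S. vadd v w \<in> S) \<and> finite (UNIV - S)"

definition gaps :: "('d \<Rightarrow> nat) set \<Rightarrow> ('d \<Rightarrow> nat) set" where
  "gaps S = UNIV - S"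

definition relaxed_monomial_order :: "(('d \<Rightarrow> nat) \<Rightarrow> ('d \<Rightarrow> nat) \<Rightarrow> bool) \<Rightarrow> bool" where
  "relaxed_monomial_order lt \<longleftrightarrow>
     (\<forall>v. \<not> lt v v) \<and>
     (\<forall>u v w. lt u v \<longrightarrow> lt v w \<longrightarrow> lt u w) \<and>
     (\<forall>v w. v \<noteq> w \<longrightarrow> lt v w \<or> lt w v) \<and>
     (\<forall>u v w. lt v w \<longrightarrow> lt v (vadd w u)) \<and>
     (\<forall>v. v \<noteq> vzero \<longrightarrow> lt vzero v)"

definition is_max_wrt :: "('a \<Rightarrow> 'a \<Rightarrow> bool) \<Rightarrow> 'a set \<Rightarrow> 'a \<Rightarrow> bool" where
  "is_max_wrt lt A F \<longleftrightarrow> F \<in> A \<and> (\<forall>x\<in>A. x \<noteq> F \<longrightarrow> lt x F)"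

definition frobenius_allowable :: "('d \<Rightarrow> nat) set \<Rightarrow> ('d \<Rightarrow> nat) set" where
  "frobenius_allowable S =
     {F. \<exists>lt. relaxed_monomial_order lt \<and> is_max_wrt lt (gaps S) F}"

definition tau :: "('d \<Rightarrow> nat) set \<Rightarrow> nat" where
  "tau S = card (frobenius_allowable S)"

definition pseudo_frobenius :: "('d \<Rightarrow> nat) set \<Rightarrow> ('d \<Rightarrow> nat) set" where
  "pseudo_frobenius S = {P \<in> gaps S. \<forall>s\<in>S. s \<noteq> vzero \<longrightarrow> vadd P s \<in> S}"

definition type_gns :: "('d \<Rightarrow> nat) set \<Rightarrow> nat" where
  "type_gns S = card (pseudo_frobenius S)"

text \<open>F - x lies in S: F - x is in N^d (x <= F componentwise) and belongs to S.\<close>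
definition diff_in :: "('d \<Rightarrow> nat) \<Rightarrow> ('d \<Rightarrow> nat) \<Rightarrow> ('d \<Rightarrow> nat) set \<Rightarrow> bool" where
  "diff_in F x S \<longleftrightarrow> (\<forall>i. x i \<le> F i) \<and> (\<lambda>i. F i - x i) \<in> S"

end

theory Submission
  imports Defs
begin

text \<open>A Frobenius allowable gap F is maximal among the gaps for an order compatible with
  addition, so F + s, being larger than F for s \<noteq> 0, cannot be a gap: FA(S) \<subseteq> PF(S).
  Conversely, every gap x lies below some pseudo-Frobenius number P, in the sense that P - x \<in> S
  (take a gap above x of maximal coordinate sum). A pseudo-Frobenius number P lies below no
  gap other than itself, so P \<in> FA(S) iff some Frobenius allowable gap lies above P. Hence
  FA(S) = PF(S), which by finiteness is \<tau>(S) = t(S), iff every gap lies below an element of FA(S).\<close>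

lemma vadd_eq_self_iff: "vadd v s = v \<longleftrightarrow> s = vzero"
  unfolding vadd_def vzero_def by (auto simp: fun_eq_iff)

lemma diff_in_eq_vadd:
  assumes "diff_in F x S"
  shows "F = vadd x (\<lambda>i. F i - x i)"
  using assms unfolding diff_in_def vadd_def by (auto intro!: ext)

lemma sum_vadd: "sum (vadd v w) (UNIV :: 'd::finite set) = sum v UNIV + sum w UNIV"
  unfolding vadd_def by (simp add: sum.distrib)

lemma sum_pos_if_nonzero:
  fixes s :: "'d::finite \<Rightarrow> nat"
  assumes "s \<noteq> vzero"
  shows "0 < sum s UNIV"
  using assms unfolding vzero_def by (auto simp: sum_eq_0_iff)

lemma finite_gaps: "GNS S \<Longrightarrow> finite (gaps S)"
  unfolding GNS_def gaps_def by blast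

lemma pseudo_frobenius_subset_gaps: "pseudo_frobenius S \<subseteq> gaps S"
  unfolding pseudo_frobenius_def by blast

lemma frobenius_allowable_subset_pseudo_frobenius:
  "frobenius_allowable S \<subseteq> pseudo_frobenius S"
proof
  fix F assume "F \<in> frobenius_allowable S"
  then obtain lt where order: "relaxed_monomial_order lt" and max: "is_max_wrt lt (gaps S) F"
    unfolding frobenius_allowable_def by blast
  have "vadd F s \<in> S" if "s \<noteq> vzero" for s
  proof (rule ccontr)
    assume "vadd F s \<notin> S"
    moreover have "vadd F s \<noteq> F" using that vadd_eq_self_iff by blast
    ultimately have "lt (vadd F s) F" using max unfolding is_max_wrt_def gaps_def by blast
    then have "lt (vadd F s) (vadd F s)" using order unfolding relaxed_monomial_order_def by blast
    then show False using order unfolding relaxed_monomial_order_def by blast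
  qed
  moreover have "F \<in> gaps S" using max unfolding is_max_wrt_def by blast
  ultimately show "F \<in> pseudo_frobenius S" unfolding pseudo_frobenius_def by blast
qed

lemma pseudo_frobenius_above_gap:
  fixes S :: "('d::finite \<Rightarrow> nat) set"
  assumes "GNS S" and "x \<in> gaps S"
  shows "\<exists>P\<in>pseudo_frobenius S. diff_in P x S"
proof -
  define A where "A = {y \<in> gaps S. diff_in y x S}"
  have "finite A" using finite_gaps[OF \<open>GNS S\<close>] unfolding A_def by simp
  have "(\<lambda>i. x i - x i) = vzero" unfolding vzero_def by simp
  then have "x \<in> A" using assms unfolding A_def diff_in_def GNS_def by simp
  let ?sums = "(\<lambda>y. sum y UNIV) ` A"
  have "Max ?sums \<in> ?sums" using \<open>finite A\<close> \<open>x \<in> A\<close> by (intro Max_in) auto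
  then obtain y where "y \<in> A" and y_Max: "sum y UNIV = Max ?sums" by auto
  have y_max: "sum z UNIV \<le> sum y UNIV" if "z \<in> A" for z
    unfolding y_Max using \<open>finite A\<close> that by (intro Max_ge) auto
  from \<open>y \<in> A\<close> have y_gap: "y \<in> gaps S" and y_above: "diff_in y x S" unfolding A_def by auto
  have "vadd y s \<in> S" if "s \<in> S" "s \<noteq> vzero" for s
  proof (rule ccontr)
    assume "vadd y s \<notin> S"
    have "vadd (\<lambda>i. y i - x i) s \<in> S"
      using \<open>GNS S\<close> y_above \<open>s \<in> S\<close> unfolding GNS_def diff_in_def by blast
    moreover have "(\<lambda>i. vadd y s i - x i) = vadd (\<lambda>i. y i - x i) s"
      using y_above unfolding diff_in_def vadd_def by (auto intro!: ext)
    ultimately have "diff_in (vadd y s) x S"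
      using y_above unfolding diff_in_def by (simp add: vadd_def trans_le_add1)
    with \<open>vadd y s \<notin> S\<close> have "vadd y s \<in> A" unfolding A_def gaps_def by blast
    then have "sum (vadd y s) UNIV \<le> sum y UNIV" by (rule y_max)
    then show False using sum_pos_if_nonzero[OF \<open>s \<noteq> vzero\<close>] by (simp add: sum_vadd)
  qed
  then have "y \<in> pseudo_frobenius S" using y_gap unfolding pseudo_frobenius_def by blast
  with y_above show ?thesis by blast
qed

lemma pseudo_frobenius_below_gap_eq:
  assumes "P \<in> pseudo_frobenius S" and "F \<in> gaps S" and "diff_in F P S"
  shows "F = P"
proof -
  define s where "s = (\<lambda>i. F i - P i)"
  have F_eq: "F = vadd P s" unfolding s_def using diff_in_eq_vadd[OF assms(3)] .
  have "s \<in> S" using assms(3) unfolding diff_in_def s_def by blast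
  show ?thesis
  proof (cases "s = vzero")
    case True
    then show ?thesis using F_eq vadd_eq_self_iff by metis
  next
    case False
    then have "F \<in> S" using assms(1) \<open>s \<in> S\<close> F_eq unfolding pseudo_frobenius_def by blast
    then show ?thesis using assms(2) unfolding gaps_def by blast
  qed
qed

lemma frobenius_allowable_eq_pseudo_frobenius_iff:
  fixes S :: "('d::finite \<Rightarrow> nat) set"
  assumes "GNS S"
  shows "frobenius_allowable S = pseudo_frobenius S \<longleftrightarrow>
         (\<forall>x\<in>gaps S. \<exists>F\<in>frobenius_allowable S. diff_in F x S)"
proof
  assume "frobenius_allowable S = pseudo_frobenius S"
  then show "\<forall>x\<in>gaps S. \<exists>F\<in>frobenius_allowable S. diff_in F x S"
    using pseudo_frobenius_above_gap[OF assms] by auto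
next
  assume above: "\<forall>x\<in>gaps S. \<exists>F\<in>frobenius_allowable S. diff_in F x S"
  have "P \<in> frobenius_allowable S" if "P \<in> pseudo_frobenius S" for P
  proof -
    have "P \<in> gaps S" using that pseudo_frobenius_subset_gaps by blast
    then obtain F where F: "F \<in> frobenius_allowable S" "diff_in F P S" using above by blast
    then have "F \<in> gaps S"
      using frobenius_allowable_subset_pseudo_frobenius pseudo_frobenius_subset_gaps by blast
    with that F have "F = P" by (intro pseudo_frobenius_below_gap_eq)
    with F show ?thesis by simp
  qed
  then show "frobenius_allowable S = pseudo_frobenius S"
    using frobenius_allowable_subset_pseudo_frobenius by blast
qed

theorem theorem3p1:
  fixes S :: "('d::finite \<Rightarrow> nat) set"
  assumes "GNS S"
  shows "tau S \<le> type_gns S \<and>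
         (tau S = type_gns S \<longleftrightarrow>
            (\<forall>x\<in>gaps S. \<exists>F\<in>frobenius_allowable S. diff_in F x S))"
proof -
  have finite_PF: "finite (pseudo_frobenius S)"
    using finite_gaps[OF assms] pseudo_frobenius_subset_gaps by (rule finite_subset[rotated])
  note FA_subset_PF = frobenius_allowable_subset_pseudo_frobenius[of S]
  have "tau S \<le> type_gns S"
    unfolding tau_def type_gns_def using card_mono[OF finite_PF FA_subset_PF] .
  moreover have "tau S = type_gns S \<longleftrightarrow> frobenius_allowable S = pseudo_frobenius S"
    unfolding tau_def type_gns_def using card_subset_eq[OF finite_PF FA_subset_PF] by auto
  ultimately show ?thesis
    using frobenius_allowable_eq_pseudo_frobenius_iff[OF assms] by simp
qed

end
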